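(* Let $S$ be either $\mathbb{Z}[j]=\{a+bj: a,b\in\mathbb{Z}\}$ or the Lipschitz order $\{r+sj: r,s\in\mathbb{Z}[i]\}=\{a+bi+cj+dk: a,b,c,d\in\mathbb{Z}\}$ in the Hamilton quaternions. Whenever $y,t\in S$ satisfy that $|y|^2$ divides $|t|^2$ in $\mathbb{Z}$, there exist $u,v\in S$ with $t=uv$ and $|u|^2=|y|^2$.
   Context: $|q|^2=q\overline{q}=a^2+b^2+c^2+d^2$ for $q=a+bi+cj+dk\in\mathbb{H}$. *)

theory Defs
  imports Main
begin

datatype iquat = IQ (qre: int) (qi: int) (qj: int) (qk: int)

text \<open>Hamilton product (i^2 = j^2 = k^2 = ijk = -1).\<close>
definition qmult :: "iquat \<Rightarrow> iquat \<Rightarrow> iquat" where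
  "qmult p q = IQ
     (qre p * qre q - qi p * qi q - qj p * qj q - qk p * qk q)
     (qre p * qi q + qi p * qre q + qj p * qk q - qk p * qj q)
     (qre p * qj q - qi p * qk q + qj p * qre q + qk p * qi q)
     (qre p * qk q + qi p * qj q - qj p * qi q + qk p * qre q)"

definition qnorm2 :: "iquat \<Rightarrow> int" where
  "qnorm2 q = (qre q)^2 + (qi q)^2 + (qj q)^2 + (qk q)^2"

definition Lipschitz :: "iquat set" where
  "Lipschitz = UNIV"

definition Zj :: "iquat set" where
  "Zj = {q. qi q = 0 \<and> qk q = 0}"

end

(* Fix a prime p dividing |y|^2.  If p does not divide t coordinatewise, Euler's descent from
   Lagrange's four-square theorem gives u in S with |u|^2 = p and p | conj(u) t, hence the
   factorisation t = u (conj(u) t / p): the centered residue x of t modulo p has |x|^2 = m p with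
   0 < m < p, and m decreases when x is replaced by x conj(y) / m, y the centered residue of x
   modulo m, for odd m, and by x s / 2 for a suitable s of norm 2 for even m.  If S contains an
   element of norm p, a left factor of norm p thus splits off both y and t; otherwise p divides y
   and t coordinatewise and splits off itself.  Induction on |y|^2 concludes. *)

theory Submission
  imports Defs "HOL-Computational_Algebra.Primes" "HOL-Library.Centered_Division"
begin

instantiation iquat :: ring_1
begin

definition "0 = IQ 0 0 0 0"
definition "1 = IQ 1 0 0 0"
definition "p + q = IQ (qre p + qre q) (qi p + qi q) (qj p + qj q) (qk p + qk q)"
definition "- q = IQ (- qre q) (- qi q) (- qj q) (- qk q)"
definition "p - q = IQ (qre p - qre q) (qi p - qi q) (qj p - qj q) (qk p - qk q)"
definition "p * q = qmult p q"

lemmas iquat_ops =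
  zero_iquat_def one_iquat_def plus_iquat_def uminus_iquat_def minus_iquat_def times_iquat_def

instance
  by standard (simp_all add: iquat_ops qmult_def algebra_simps)

end

(* In this noncommutative ring, c dvd q means q = c * k; for an integer c this is coordinatewise
   divisibility (of_int_dvd_iquat_iff). *)
instance iquat :: Rings.dvd ..

lemma of_int_iquat: "of_int c = IQ c 0 0 0"
proof -
  have "of_nat n = IQ (int n) 0 0 0" for n
    by (induction n) (simp_all add: iquat_ops)
  then show ?thesis
    by (cases c rule: int_cases) (simp_all add: iquat_ops)
qed

lemma of_int_mult_iquat: "of_int c * q = IQ (c * qre q) (c * qi q) (c * qj q) (c * qk q)"
  by (simp add: of_int_iquat times_iquat_def qmult_def)

definition qconj :: "iquat \<Rightarrow> iquat" where
  "qconj q = IQ (qre q) (- qi q) (- qj q) (- qk q)"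

lemma qconj_mult: "qconj (p * q) = qconj q * qconj p"
  by (simp add: qconj_def times_iquat_def qmult_def algebra_simps)

lemma qconj_diff: "qconj (p - q) = qconj p - qconj q"
  by (simp add: qconj_def minus_iquat_def)

lemma qconj_qconj [simp]: "qconj (qconj q) = q"
  by (simp add: qconj_def)

lemma qconj_of_int_mult: "qconj (of_int c * q) = of_int c * qconj q"
  by (simp add: qconj_def of_int_mult_iquat)

lemma mult_qconj_right: "q * qconj q = of_int (qnorm2 q)"
  by (simp add: qconj_def times_iquat_def qmult_def of_int_iquat qnorm2_def power2_eq_square)

lemma mult_qconj_left: "qconj q * q = of_int (qnorm2 q)"
  by (simp add: qconj_def times_iquat_def qmult_def of_int_iquat qnorm2_def power2_eq_square)

lemma qnorm2_mult: "qnorm2 (p * q) = qnorm2 p * qnorm2 q"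
  by (simp add: times_iquat_def qmult_def qnorm2_def power2_eq_square algebra_simps)

lemma qnorm2_of_int: "qnorm2 (of_int c) = c\<^sup>2"
  by (simp add: qnorm2_def of_int_iquat)

lemma qnorm2_qconj: "qnorm2 (qconj q) = qnorm2 q"
  by (simp add: qnorm2_def qconj_def)

lemma qnorm2_nonneg: "0 \<le> qnorm2 q"
  by (simp add: qnorm2_def)

lemma qnorm2_eq_0_iff: "qnorm2 q = 0 \<longleftrightarrow> q = 0"
  by (cases q) (simp add: qnorm2_def zero_iquat_def add_nonneg_eq_0_iff)

lemma of_int_dvd_iquat_iff:
  "of_int p dvd (q :: iquat) \<longleftrightarrow> p dvd qre q \<and> p dvd qi q \<and> p dvd qj q \<and> p dvd qk q"
proof
  assume "of_int p dvd q"
  then obtain k where "q = of_int p * k" ..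
  then show "p dvd qre q \<and> p dvd qi q \<and> p dvd qj q \<and> p dvd qk q"
    by (simp add: of_int_mult_iquat)
next
  assume "p dvd qre q \<and> p dvd qi q \<and> p dvd qj q \<and> p dvd qk q"
  then have "q = of_int p * IQ (qre q div p) (qi q div p) (qj q div p) (qk q div p)"
    by (cases q) (simp add: of_int_mult_iquat)
  then show "of_int p dvd q" ..
qed

lemma of_int_mult_left_cancel_iquat:
  "of_int c * p = of_int c * (q :: iquat) \<Longrightarrow> c \<noteq> 0 \<Longrightarrow> p = q"
  by (cases p; cases q) (simp add: of_int_mult_iquat)

lemma of_int_dvd_mult_left_iquat: "of_int p dvd q \<Longrightarrow> of_int p dvd r * (q :: iquat)"
  by (metis dvd_def mult.assoc mult_of_int_commute)

lemma of_int_dvd_qconj: "of_int p dvd q \<Longrightarrow> of_int p dvd qconj q"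
  by (simp add: of_int_dvd_iquat_iff qconj_def)

lemma of_int_dvd_diff_iquat:
  "of_int p dvd a \<Longrightarrow> of_int p dvd b \<Longrightarrow> of_int p dvd a - (b :: iquat)"
  by (simp add: of_int_dvd_iquat_iff minus_iquat_def)

lemma prime_dvd_of_int_mult_iquat:
  assumes "prime p" "\<not> p dvd c" "of_int p dvd of_int c * (q :: iquat)"
  shows "of_int p dvd q"
  using assms unfolding of_int_dvd_iquat_iff of_int_mult_iquat by (simp add: prime_dvd_mult_iff)

lemma left_factor_of_conj_mult:
  assumes "qnorm2 u = p" "p \<noteq> 0" "qconj u * t = of_int p * v"
  shows "t = u * v"
proof -
  have "of_int p * (u * v) = u * (qconj u * t)"
    using assms(3) by (metis mult.assoc mult_of_int_commute)
  also have "\<dots> = of_int p * t"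
    by (simp add: assms(1) mult.assoc[symmetric] mult_qconj_right)
  finally show ?thesis
    using assms(2) of_int_mult_left_cancel_iquat by metis
qed

lemma mult_qconj_diff_of_int_mult:
  assumes "qnorm2 x = m * p"
  shows "x * qconj (x - of_int m * q) = of_int m * (of_int p - x * qconj q)"
proof -
  have "x * qconj (x - of_int m * q) = x * qconj x - x * (of_int m * qconj q)"
    by (simp add: qconj_diff qconj_of_int_mult right_diff_distrib)
  also have "\<dots> = of_int m * (of_int p - x * qconj q)"
    unfolding mult_qconj_right assms right_diff_distrib
    by (simp add: mult.assoc[symmetric] mult_of_int_commute[of m x])
  finally show ?thesis .
qed

lemma coprime_cross_mult_eq:
  fixes a b m p :: int
  assumes "coprime m p" "p * a = m * b" "m \<noteq> 0"
  obtains r where "a = m * r" "b = r * p"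
proof -
  have "m dvd a"
    using assms(1,2) by (metis coprime_dvd_mult_right_iff dvd_triv_left)
  then obtain r where "a = m * r" ..
  moreover have "b = r * p"
    using assms(2,3) calculation by (simp add: ac_simps)
  ultimately show thesis ..
qed

definition qcmod :: "iquat \<Rightarrow> int \<Rightarrow> iquat" where
  "qcmod q m = IQ (qre q cmod m) (qi q cmod m) (qj q cmod m) (qk q cmod m)"

definition qcdiv :: "iquat \<Rightarrow> int \<Rightarrow> iquat" where
  "qcdiv q m = IQ (qre q cdiv m) (qi q cdiv m) (qj q cdiv m) (qk q cdiv m)"

lemma qcmod_add_qcdiv: "qcmod q m + of_int m * qcdiv q m = q"
  by (simp add: qcmod_def qcdiv_def of_int_mult_iquat plus_iquat_def cmod_mult_cdiv_eq)

lemma double_cmod_square_less: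
  assumes "0 < m" "odd m"
  shows "(2 * (k cmod m))\<^sup>2 < m\<^sup>2"
proof -
  have "\<bar>2 * (k cmod m)\<bar> < \<bar>m\<bar>"
    using abs_cmod_less_equal[of m k] assms by (auto simp: abs_mult elim!: oddE)
  then show ?thesis
    by (simp add: abs_le_square_iff less_le_not_le)
qed

lemma qnorm2_qcmod_less:
  assumes "0 < m" "odd m"
  shows "qnorm2 (qcmod q m) < m\<^sup>2"
  using double_cmod_square_less[OF assms, of "qre q"] double_cmod_square_less[OF assms, of "qi q"]
    double_cmod_square_less[OF assms, of "qj q"] double_cmod_square_less[OF assms, of "qk q"]
  by (simp add: qnorm2_def qcmod_def power_mult_distrib)

locale zj_or_lipschitz =
  fixes S :: "iquat set"
  assumes S_cases: "S = Zj \<or> S = Lipschitz"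
begin

lemma mult_mem: "a \<in> S \<Longrightarrow> b \<in> S \<Longrightarrow> a * b \<in> S"
  using S_cases by (auto simp: Zj_def Lipschitz_def times_iquat_def qmult_def)

lemma diff_mem: "a \<in> S \<Longrightarrow> b \<in> S \<Longrightarrow> a - b \<in> S"
  using S_cases by (auto simp: Zj_def Lipschitz_def minus_iquat_def)

lemma of_int_mem: "of_int c \<in> S"
  using S_cases by (auto simp: Zj_def Lipschitz_def of_int_iquat)

lemma qconj_mem: "a \<in> S \<Longrightarrow> qconj a \<in> S"
  using S_cases by (auto simp: Zj_def Lipschitz_def qconj_def)

lemma of_int_mult_memD: "of_int c * a \<in> S \<Longrightarrow> c \<noteq> 0 \<Longrightarrow> a \<in> S"
  using S_cases by (auto simp: Zj_def Lipschitz_def of_int_mult_iquat)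

lemma qcmod_mem: "a \<in> S \<Longrightarrow> qcmod a m \<in> S"
  using S_cases by (auto simp: Zj_def Lipschitz_def qcmod_def)

lemma qcdiv_mem: "a \<in> S \<Longrightarrow> qcdiv a m \<in> S"
  using S_cases by (auto simp: Zj_def Lipschitz_def qcdiv_def)

lemma halving_by_norm_two:
  assumes "x \<in> S" "even (qnorm2 x)"
  shows "\<exists>s\<in>S. qnorm2 s = 2 \<and> 2 dvd x * s"
proof -
  obtain a b c d where x: "x = IQ a b c d"
    by (cases x)
  have dvd2_iff: "2 dvd q \<longleftrightarrow> even (qre q) \<and> even (qi q) \<and> even (qj q) \<and> even (qk q)" for q
    using of_int_dvd_iquat_iff[of 2 q] by simp
  note simps = x dvd2_iff times_iquat_def qmult_def qnorm2_def Zj_def Lipschitz_def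
  have par: "even (a + b + c + d)"
    using assms(2) by (simp add: x qnorm2_def)
  consider (in_Zj) "S = Zj" "b = 0" "d = 0" | (in_Lipschitz) "S = Lipschitz"
    using S_cases assms(1) by (auto simp: Zj_def x)
  then show ?thesis
  proof cases
    case in_Zj
    then show ?thesis
      using par by (intro bexI[of _ "IQ 1 0 1 0"]) (simp_all add: simps)
  next
    case in_Lipschitz
    consider "even (a + b)" "even (c + d)" | "even (a + c)" "even (b + d)"
      | "even (a + d)" "even (b + c)"
      using par by (cases "even a"; cases "even b"; cases "even c"; simp)
    then show ?thesis
    proof cases
      case 1
      then show ?thesis
        using in_Lipschitz by (intro bexI[of _ "IQ 1 1 0 0"]) (simp_all add: simps)
    next
      case 2
      then show ?thesis
        using in_Lipschitz by (intro bexI[of _ "IQ 1 0 1 0"]) (simp_all add: simps)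
    next
      case 3
      then show ?thesis
        using in_Lipschitz by (intro bexI[of _ "IQ 1 0 0 1"]) (simp_all add: simps)
    qed
  qed
qed

lemma descent_step_even:
  assumes "prime p" "odd p" "x \<in> S" "qnorm2 x = m * p" "even m"
    and "of_int p dvd qconj x * t"
  shows "\<exists>x'\<in>S. qnorm2 x' = (m div 2) * p \<and> of_int p dvd qconj x' * t"
proof -
  obtain s where "s \<in> S" and s2: "qnorm2 s = 2" and "2 dvd x * s"
    using halving_by_norm_two[OF assms(3)] assms(4,5) by auto
  then obtain x' where xs: "x * s = of_int 2 * x'"
    by auto
  have "x' \<in> S"
    using mult_mem[OF assms(3) \<open>s \<in> S\<close>] xs of_int_mult_memD[of 2 x'] by simp
  moreover have "qnorm2 x' = (m div 2) * p"
    using arg_cong[OF xs, of qnorm2] assms(4,5) s2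
    by (auto simp: qnorm2_mult qnorm2_of_int[of 2, simplified] elim!: evenE)
  moreover have "of_int p dvd qconj x' * t"
  proof (rule prime_dvd_of_int_mult_iquat[OF assms(1)])
    show "\<not> p dvd 2"
      using primes_dvd_imp_eq[OF assms(1) two_is_prime] assms(2) by auto
    have "of_int 2 * (qconj x' * t) = qconj (x * s) * t"
      by (simp only: xs qconj_of_int_mult mult.assoc)
    also have "\<dots> = qconj s * (qconj x * t)"
      by (simp add: qconj_mult mult.assoc)
    finally show "of_int p dvd of_int 2 * (qconj x' * t)"
      using of_int_dvd_mult_left_iquat[OF assms(6)] by simp
  qed
  ultimately show ?thesis by blast
qed

lemma descent_step_odd:
  assumes "prime p" "x \<in> S" "qnorm2 x = m * p" "odd m" "1 < m" "m < p"
    and "of_int p dvd qconj x * t"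
  shows "\<exists>w\<in>S. \<exists>r. 0 < r \<and> r < m \<and> qnorm2 w = r * p \<and> of_int p dvd qconj w * t"
proof -
  define y q where "y = qcmod x m" and "q = qcdiv x m"
  have y: "y = x - of_int m * q"
    by (simp add: y_def q_def eq_diff_eq qcmod_add_qcdiv)
  define w where "w = of_int p - x * qconj q"
  have "w \<in> S"
    unfolding w_def q_def using assms(2) by (intro diff_mem of_int_mem mult_mem qconj_mem qcdiv_mem)
  have xy: "x * qconj y = of_int m * w"
    unfolding y w_def by (rule mult_qconj_diff_of_int_mult[OF assms(3)])
  have "m * (p * qnorm2 y) = m * (m * qnorm2 w)"
    using arg_cong[OF xy, of qnorm2] assms(3)
    by (simp add: qnorm2_mult qnorm2_qconj qnorm2_of_int power2_eq_square ac_simps)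
  then have pyw: "p * qnorm2 y = m * qnorm2 w"
    using assms(5) by simp
  have "\<not> p dvd m"
    using assms(5,6) zdvd_not_zless by simp
  then have "coprime m p"
    using prime_imp_coprime[OF assms(1)] coprime_commute by blast
  then obtain r where r: "qnorm2 y = m * r" and "qnorm2 w = r * p"
    using coprime_cross_mult_eq[OF _ pyw] assms(5) by (metis not_one_less_zero)
  moreover have "r < m"
    using qnorm2_qcmod_less[of m x] assms(4,5) r by (simp add: y_def power2_eq_square)
  moreover have "y \<noteq> 0"
  proof
    assume "y = 0"
    then have "qnorm2 x = m\<^sup>2 * qnorm2 q"
      using y by (simp add: qnorm2_mult qnorm2_of_int)
    then have "m dvd p"
      using assms(3,5) by (simp add: power2_eq_square)
    then show False
      using assms(1,5,6) by (auto simp: prime_int_iff dest!: spec[of _ m])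
  qed
  then have "0 < r"
    using r assms(5) qnorm2_nonneg[of y] qnorm2_eq_0_iff[of y] by (simp add: zero_le_mult_iff)
  moreover have "of_int p dvd qconj w * t"
  proof (rule prime_dvd_of_int_mult_iquat[OF assms(1) \<open>\<not> p dvd m\<close>])
    have "of_int m * (qconj w * t) = y * (qconj x * t)"
      by (simp add: mult.assoc[symmetric] qconj_of_int_mult[symmetric] xy[symmetric] qconj_mult)
    then show "of_int p dvd of_int m * (qconj w * t)"
      using of_int_dvd_mult_left_iquat[OF assms(7)] by simp
  qed
  ultimately show ?thesis
    using \<open>w \<in> S\<close> by blast
qed

lemma descent:
  assumes "prime p" "odd p"
  shows "x \<in> S \<Longrightarrow> qnorm2 x = m * p \<Longrightarrow> 0 < m \<Longrightarrow> m < p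
    \<Longrightarrow> of_int p dvd qconj x * t \<Longrightarrow> \<exists>u\<in>S. qnorm2 u = p \<and> of_int p dvd qconj u * t"
proof (induction "nat m" arbitrary: m x rule: less_induct)
  case (less m x)
  consider "m = 1" | "1 < m" "even m" | "1 < m" "odd m"
    using less.prems(3) by fastforce
  then show ?case
  proof cases
    case 1
    then show ?thesis
      using less.prems(1,2,5) by (metis mult_1)
  next
    case 2
    then obtain x' where "x' \<in> S" "qnorm2 x' = (m div 2) * p" "of_int p dvd qconj x' * t"
      using descent_step_even[OF assms less.prems(1,2)] less.prems(5) by blast
    moreover have "0 < m div 2" "m div 2 < m"
      using 2 by auto
    ultimately show ?thesis
      using less.hyps[of "m div 2"] less.prems(4) by auto
  next
    case 3
    then obtain w r where "w \<in> S" "0 < r" "r < m" "qnorm2 w = r * p" "of_int p dvd qconj w * t"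
      using descent_step_odd[OF assms(1) less.prems(1,2)] less.prems(4,5) by blast
    then show ?thesis
      using less.hyps[of r] less.prems(4) by auto
  qed
qed

lemma descent_start:
  assumes "prime p" "odd p" "t \<in> S" "p dvd qnorm2 t" "\<not> of_int p dvd t"
  shows "\<exists>x\<in>S. \<exists>m. 0 < m \<and> m < p \<and> qnorm2 x = m * p \<and> of_int p dvd qconj x * t"
proof -
  have p0: "0 < p"
    using assms(1) prime_gt_0_int by blast
  define x q where "x = qcmod t p" and "q = qcdiv t p"
  have x: "x = t - of_int p * q"
    by (simp add: x_def q_def eq_diff_eq qcmod_add_qcdiv)
  obtain k where k: "qnorm2 t = p * k"
    using assms(4) ..
  have "qconj x * t = of_int p * (of_int k - qconj q * t)"
    by (simp add: x k qconj_diff qconj_of_int_mult left_diff_distrib right_diff_distrib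
        mult_qconj_left mult.assoc)
  then have xt: "of_int p dvd qconj x * t" ..
  have "of_int (qnorm2 x) = qconj x * (t - of_int p * q)"
    by (simp add: mult_qconj_left[symmetric] x[symmetric])
  also have "\<dots> = qconj x * t - of_int p * (qconj x * q)"
    by (metis mult.assoc mult_of_int_commute right_diff_distrib)
  also have "of_int p dvd \<dots>"
    by (rule of_int_dvd_diff_iquat[OF xt dvdI[OF refl]])
  finally have "p dvd qnorm2 x"
    unfolding of_int_dvd_iquat_iff by (simp add: of_int_iquat)
  then obtain m where m: "qnorm2 x = m * p"
    by (metis dvdE mult.commute)
  have "x \<noteq> 0"
    using assms(5) x by (auto intro: dvdI)
  then have "0 < m"
    using m p0 qnorm2_nonneg[of x] qnorm2_eq_0_iff[of x] by (simp add: zero_le_mult_iff)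
  moreover have "m < p"
    using qnorm2_qcmod_less[OF p0 assms(2), of t] m p0 by (simp add: x_def power2_eq_square)
  moreover have "x \<in> S"
    using assms(3) by (simp add: x_def qcmod_mem)
  ultimately show ?thesis
    using m xt by blast
qed

lemma prime_norm_left_factor:
  assumes "prime p" "t \<in> S" "p dvd qnorm2 t" "\<not> of_int p dvd t"
  shows "\<exists>u\<in>S. \<exists>v\<in>S. t = u * v \<and> qnorm2 u = p"
proof -
  have "\<exists>u\<in>S. qnorm2 u = p \<and> of_int p dvd qconj u * t"
  proof (cases "p = 2")
    case True
    then obtain s where "s \<in> S" "qnorm2 s = 2" "2 dvd qconj t * s"
      using halving_by_norm_two[OF qconj_mem[OF assms(2)]] assms(3) by (auto simp: qnorm2_qconj)
    moreover have "2 dvd qconj s * t"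
      using of_int_dvd_qconj[of 2 "qconj t * s"] \<open>2 dvd qconj t * s\<close> by (simp add: qconj_mult)
    ultimately show ?thesis
      unfolding True of_int_numeral by blast
  next
    case False
    then have "odd p"
      using primes_dvd_imp_eq[OF two_is_prime assms(1)] by auto
    then show ?thesis
      using descent_start[OF assms(1) \<open>odd p\<close> assms(2-4)] descent[OF assms(1) \<open>odd p\<close>]
      by blast
  qed
  then obtain u v where "u \<in> S" "qnorm2 u = p" "qconj u * t = of_int p * v"
    by blast
  moreover have "p \<noteq> 0"
    using assms(1) by auto
  moreover have "v \<in> S"
    using mult_mem[OF qconj_mem[OF \<open>u \<in> S\<close>] assms(2)] \<open>qconj u * t = of_int p * v\<close>
      \<open>p \<noteq> 0\<close> of_int_mult_memD by metis
  ultimately show ?thesis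
    using left_factor_of_conj_mult by blast
qed

lemma left_factor_of_norm_step:
  assumes "y \<in> S" "t \<in> S" "1 < qnorm2 y" "qnorm2 y dvd qnorm2 t"
  shows "\<exists>a\<in>S. \<exists>t'\<in>S. \<exists>y'\<in>S.
           t = a * t' \<and> qnorm2 y = qnorm2 a * qnorm2 y' \<and> 1 < qnorm2 a"
proof -
  obtain p where p: "prime p" "p dvd qnorm2 y"
    using assms(3) prime_divisor_exists[of "qnorm2 y"] by auto
  have "p dvd qnorm2 t"
    using p(2) assms(4) by (rule dvd_trans)
  have "1 < p"
    using p(1) prime_gt_1_int by blast
  show ?thesis
    \<comment> \<open>Elements of norm p need not exist, e.g. for p = 3 in Zj.\<close>
  proof (cases "\<exists>w\<in>S. qnorm2 w = p")
    case True
    then obtain w where "w \<in> S" "qnorm2 w = p" ..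
    have factor: "\<exists>a\<in>S. \<exists>z'\<in>S. z = a * z' \<and> qnorm2 a = p"
      if "z \<in> S" "p dvd qnorm2 z" for z
    proof (cases "of_int p dvd z")
      case True
      then obtain z' where "z = of_int p * z'" ..
      then have "z = w * (qconj w * z')" and "z' \<in> S"
        using \<open>qnorm2 w = p\<close> of_int_mult_memD[of p z'] that(1) \<open>1 < p\<close>
        by (auto simp: mult.assoc[symmetric] mult_qconj_right)
      then show ?thesis
        using \<open>w \<in> S\<close> \<open>qnorm2 w = p\<close> mult_mem qconj_mem by blast
    next
      case False
      then show ?thesis
        using prime_norm_left_factor[OF p(1) that] by blast
    qed
    obtain a t' where "a \<in> S" "t' \<in> S" "t = a * t'" "qnorm2 a = p"
      using factor[OF assms(2) \<open>p dvd qnorm2 t\<close>] by blast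
    moreover obtain b y' where "y' \<in> S" "y = b * y'" "qnorm2 b = p"
      using factor[OF assms(1) p(2)] by blast
    ultimately show ?thesis
      using \<open>1 < p\<close> by (metis qnorm2_mult)
  next
    case False
    then have "of_int p dvd y" "of_int p dvd t"
      using prime_norm_left_factor[OF p(1)] assms(1,2) p(2) \<open>p dvd qnorm2 t\<close> by blast+
    then obtain y' t' where y': "y = of_int p * y'" and t': "t = of_int p * t'"
      by (elim dvdE)
    then have "y' \<in> S" "t' \<in> S"
      using assms(1,2) of_int_mult_memD \<open>1 < p\<close> by auto
    moreover have "1 < qnorm2 (of_int p :: iquat)"
      using \<open>1 < p\<close> by (simp add: qnorm2_of_int)
    ultimately show ?thesis
      using y' t' of_int_mem by (metis qnorm2_mult)
  qed
qed

lemma left_factor_of_norm: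
  "y \<in> S \<Longrightarrow> t \<in> S \<Longrightarrow> qnorm2 y dvd qnorm2 t
    \<Longrightarrow> \<exists>u\<in>S. \<exists>v\<in>S. t = u * v \<and> qnorm2 u = qnorm2 y"
proof (induction "nat (qnorm2 y)" arbitrary: y t rule: less_induct)
  case (less y t)
  consider "qnorm2 y = 0" | "qnorm2 y = 1" | "1 < qnorm2 y"
    using qnorm2_nonneg[of y] by linarith
  then show ?case
  proof cases
    case 1
    moreover have "qnorm2 t = 0"
      using 1 less.prems(3) by simp
    ultimately have "y = 0" "t = 0"
      by (simp_all add: qnorm2_eq_0_iff)
    then show ?thesis
      using less.prems(1) by (metis mult_zero_left)
  next
    case 2
    then have "t = y * (qconj y * t)"
      by (simp add: mult.assoc[symmetric] mult_qconj_right)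
    then show ?thesis
      using 2 less.prems(1,2) mult_mem qconj_mem by blast
  next
    case 3
    then obtain a t' y' where "a \<in> S" "t' \<in> S" "y' \<in> S" and t: "t = a * t'"
      and y: "qnorm2 y = qnorm2 a * qnorm2 y'" and a: "1 < qnorm2 a"
      using left_factor_of_norm_step[OF less.prems(1,2) _ less.prems(3)] by blast
    have "0 < qnorm2 y'"
      using 3 y qnorm2_nonneg[of y'] by (auto simp: le_less)
    then have "nat (qnorm2 y') < nat (qnorm2 y)"
      using y a by simp
    moreover have "qnorm2 y' dvd qnorm2 t'"
      using less.prems(3) a by (simp add: y t qnorm2_mult)
    ultimately obtain u v where "u \<in> S" "v \<in> S" "t' = u * v" "qnorm2 u = qnorm2 y'"
      using less.hyps \<open>y' \<in> S\<close> \<open>t' \<in> S\<close> by blast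
    then show ?thesis
      using \<open>a \<in> S\<close> t y by (metis mult.assoc mult_mem qnorm2_mult)
  qed
qed

end

theorem mainTheorem12:
  assumes "S = Zj \<or> S = Lipschitz"
    and "y \<in> S" and "t \<in> S"
    and "qnorm2 y dvd qnorm2 t"
  shows "\<exists>u\<in>S. \<exists>v\<in>S. t = qmult u v \<and> qnorm2 u = qnorm2 y"
proof -
  interpret zj_or_lipschitz S
    using assms(1) by unfold_locales
  show ?thesis
    using left_factor_of_norm[OF assms(2-4)] by (simp add: times_iquat_def)
qed

end
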